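(* Let $Z$ be a feasible point of the SDP relaxation described in the context, with first-row data $(z_+,z_-,\rho)$, and let $(x_+^{Q},x_-^{Q},r^{Q})$ be its reconstruction, i.e. $x_\pm^{Q}=z_\pm$ and $r^{Q}=\max\{r\in[0,1]: (A_\delta z_+ + A_\delta z_- + b_\delta)\,r + A_c z_+ - A_c z_- - b_c\le 0\}$. If $(x_+^{Q},x_-^{Q})$ is a strictly efficient solution of the LP of robustness level $r^{Q}$, then $(x_+^{Q},x_-^{Q},r^{Q})$ is an efficient solution of the QCQP.
   Context: Let $k,m,n\in\mathbb{N}$. Let $A_c,A_\delta\in\mathbb{R}^{m\times n}$ with $A_\delta\ge 0$ entrywise, $b_c,b_\delta\in\mathbb{R}^m$ with $b_\delta\ge0$, $G\in\mathbb{R}^{k\times n}$, and $\ell,u\in\mathbb{R}^n$ with $\ell\le u$. All vector inequalities are componentwise. QCQP: variables $x_+,x_-\in\mathbb{R}^n_{\ge0}$, $r\in[0,1]$, subject to $A_cx_+-A_cx_-+rA_\delta x_++rA_\delta x_-+rb_\delta-b_c\le0$ and $\ell\le x_+-x_-\le u$; vector objective $F(x_+,x_-,r)=(G(x_+-x_-),-r)\in\mathbb{R}^{k+1}$, minimized in the Pareto sense. LP of robustness level $r$ (for fixed $r\in[0,1]$): variables $x_+,x_-\in\mathbb{R}^n_{\ge0}$, subject to $(A_c+rA_\delta)x_+-(A_c-rA_\delta)x_-\le b_c-rb_\delta$ and $\ell\le x_+-x_-\le u$; vector objective $G(x_+-x_-)\in\mathbb{R}^k$, minimized in the Pareto sense.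 SDP relaxation: variable a symmetric positive semidefinite matrix $Z$ of size $(2n+2)\times(2n+2)$ written in block form with row/column blocks of sizes $1,n,n,1$: $Z=\begin{pmatrix} Z_{00} & z_+^T & z_-^T & \rho\\ z_+ & * & * & w_+\\ z_- & * & * & w_-\\ \rho & w_+^T & w_-^T & \sigma\end{pmatrix}$, with $z_\pm,w_\pm\in\mathbb{R}^n$, $\rho,\sigma\in\mathbb{R}$. Constraints: $Z_{00}=1$; $A_cz_+-A_cz_-+A_\delta(w_++w_-)+\rho\, b_\delta-b_c\le0$; $\ell\le z_+-z_-\le u$; $z_+,z_-\ge0$, $\rho\ge0$, $w_+,w_-\ge0$; $\sigma\le1$. Vector objective $(G(z_+-z_-),-\rho)\in\mathbb{R}^{k+1}$, minimized in the Pareto sense. Efficiency (for minimizing a vector function $f$ over a feasible set $\mathcal{X}$): $x^*\in\mathcal{X}$ is efficient if there is no $x\in\mathcal{X}$ with $f(x)\le f(x^* )$ and $f(x)\ne f(x^* )$; weakly efficient if there is no $x\in\mathcal{X}$ with $f(x)<f(x^* )$ (all components strict); strictly efficient if there is no $x\in\mathcal{X}$, $x\neq x^*$, with $f(x)\le f(x^* )$. For $\epsilon\ge0$, $x^*$ is weakly $\epsilon$-efficient if there is no $x\in\mathcal{X}$ with $f(x)<f(x^* )-\epsilon\mathbb{1}$, where $\mathbb{1}$ is the all-ones vector. *)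

theory Defs
  imports "HOL-Analysis.Analysis"
begin

text \<open>Vector orders on real^'n are componentwise (less_eq_vec_def, less_vec_def).\<close>

definition efficient :: "'a set \<Rightarrow> ('a \<Rightarrow> 'b::order) \<Rightarrow> 'a \<Rightarrow> bool" where
  "efficient X f x \<longleftrightarrow> x \<in> X \<and> \<not> (\<exists>y\<in>X. f y \<le> f x \<and> f y \<noteq> f x)"

definition strictly_efficient :: "'a set \<Rightarrow> ('a \<Rightarrow> 'b::order) \<Rightarrow> 'a \<Rightarrow> bool" where
  "strictly_efficient X f x \<longleftrightarrow> x \<in> X \<and> \<not> (\<exists>y\<in>X. y \<noteq> x \<and> f y \<le> f x)"

definition qcqp_feasible ::
  "real^'n^'m \<Rightarrow> real^'n^'m \<Rightarrow> real^'m \<Rightarrow> real^'m \<Rightarrow> real^'n \<Rightarrow> real^'n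
   \<Rightarrow> ((real^'n) \<times> (real^'n) \<times> real) set" where
  "qcqp_feasible Ac Ad bc bd l u =
    {(xp, xm, r). 0 \<le> xp \<and> 0 \<le> xm \<and> 0 \<le> r \<and> r \<le> 1 \<and>
      Ac *v xp - Ac *v xm + r *\<^sub>R (Ad *v xp) + r *\<^sub>R (Ad *v xm) + r *\<^sub>R bd - bc \<le> 0 \<and>
      l \<le> xp - xm \<and> xp - xm \<le> u}"

definition qcqp_obj :: "real^'n^'k \<Rightarrow> (real^'n) \<times> (real^'n) \<times> real \<Rightarrow> real^('k + unit)" where
  "qcqp_obj G = (\<lambda>(xp, xm, r). \<chi> i. (case i of Inl j \<Rightarrow> (G *v (xp - xm)) $ j | Inr _ \<Rightarrow> - r))"

definition lp_feasible ::
  "real^'n^'m \<Rightarrow> real^'n^'m \<Rightarrow> real^'m \<Rightarrow> real^'m \<Rightarrow> real^'n \<Rightarrow> real^'n \<Rightarrow> real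
   \<Rightarrow> ((real^'n) \<times> (real^'n)) set" where
  "lp_feasible Ac Ad bc bd l u r =
    {(xp, xm). 0 \<le> xp \<and> 0 \<le> xm \<and>
      (Ac + r *\<^sub>R Ad) *v xp - (Ac - r *\<^sub>R Ad) *v xm \<le> bc - r *\<^sub>R bd \<and>
      l \<le> xp - xm \<and> xp - xm \<le> u}"

definition lp_obj :: "real^'n^'k \<Rightarrow> (real^'n) \<times> (real^'n) \<Rightarrow> real^'k" where
  "lp_obj G = (\<lambda>(xp, xm). G *v (xp - xm))"

definition psd :: "real^'a^'a \<Rightarrow> bool" where
  "psd Z \<longleftrightarrow> transpose Z = Z \<and> (\<forall>x. 0 \<le> x \<bullet> (Z *v x))"

text \<open>SDP matrix indices: blocks of sizes 1, n, n, 1 as unit + 'n + 'n + unit.\<close>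
type_synonym 'n sdpidx = "unit + 'n + 'n + unit"

definition i0 :: "'n sdpidx" where "i0 = Inl ()"
definition ip :: "'n \<Rightarrow> 'n sdpidx" where "ip j = Inr (Inl j)"
definition im :: "'n \<Rightarrow> 'n sdpidx" where "im j = Inr (Inr (Inl j))"
definition ilast :: "'n sdpidx" where "ilast = Inr (Inr (Inr ()))"

definition sdp_zp :: "real^('n::finite sdpidx)^('n sdpidx) \<Rightarrow> real^'n" where
  "sdp_zp Z = (\<chi> j. Z $ i0 $ ip j)"
definition sdp_zm :: "real^('n::finite sdpidx)^('n sdpidx) \<Rightarrow> real^'n" where
  "sdp_zm Z = (\<chi> j. Z $ i0 $ im j)"
definition sdp_rho :: "real^('n::finite sdpidx)^('n sdpidx) \<Rightarrow> real" where
  "sdp_rho Z = Z $ i0 $ ilast"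
definition sdp_wp :: "real^('n::finite sdpidx)^('n sdpidx) \<Rightarrow> real^'n" where
  "sdp_wp Z = (\<chi> j. Z $ ip j $ ilast)"
definition sdp_wm :: "real^('n::finite sdpidx)^('n sdpidx) \<Rightarrow> real^'n" where
  "sdp_wm Z = (\<chi> j. Z $ im j $ ilast)"
definition sdp_sigma :: "real^('n::finite sdpidx)^('n sdpidx) \<Rightarrow> real" where
  "sdp_sigma Z = Z $ ilast $ ilast"

definition sdp_feasible ::
  "real^'n^'m \<Rightarrow> real^'n^'m \<Rightarrow> real^'m \<Rightarrow> real^'m \<Rightarrow> real^'n \<Rightarrow> real^'n
   \<Rightarrow> real^('n::finite sdpidx)^('n sdpidx) \<Rightarrow> bool" where
  "sdp_feasible Ac Ad bc bd l u Z \<longleftrightarrow> psd Z \<and> Z $ i0 $ i0 = 1 \<and>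
     Ac *v sdp_zp Z - Ac *v sdp_zm Z + Ad *v (sdp_wp Z + sdp_wm Z) + sdp_rho Z *\<^sub>R bd - bc \<le> 0 \<and>
     l \<le> sdp_zp Z - sdp_zm Z \<and> sdp_zp Z - sdp_zm Z \<le> u \<and>
     0 \<le> sdp_zp Z \<and> 0 \<le> sdp_zm Z \<and> 0 \<le> sdp_rho Z \<and> 0 \<le> sdp_wp Z \<and> 0 \<le> sdp_wm Z \<and>
     sdp_sigma Z \<le> 1"

text \<open>Reconstructed robustness level r^Q (the maximum exists: the set contains 0 for
  SDP-feasible Z and is compact).\<close>
definition recon_r ::
  "real^'n^'m \<Rightarrow> real^'n^'m \<Rightarrow> real^'m \<Rightarrow> real^'m \<Rightarrow> real^('n::finite sdpidx)^('n sdpidx) \<Rightarrow> real" where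
  "recon_r Ac Ad bc bd Z = (GREATEST r. 0 \<le> r \<and> r \<le> 1 \<and>
     r *\<^sub>R (Ad *v sdp_zp Z + Ad *v sdp_zm Z + bd) + Ac *v sdp_zp Z - Ac *v sdp_zm Z - bc \<le> 0)"

end

theory Submission
  imports Defs
begin

text \<open>The QCQP is the union over \<open>r \<in> [0,1]\<close> of the LPs of robustness level \<open>r\<close>, and
  because \<open>A\<^sub>\<delta>, b\<^sub>\<delta> \<ge> 0\<close> and \<open>x\<^sub>\<plusminus> \<ge> 0\<close> the LP feasible sets shrink as \<open>r\<close> grows.
  A QCQP point dominating \<open>(z\<^sub>+, z\<^sub>-, r\<^sup>Q)\<close> has level \<open>r \<ge> r\<^sup>Q\<close>, so its \<open>x\<close>-part is
  feasible for the LP of level \<open>r\<^sup>Q\<close> and dominates \<open>(z\<^sub>+, z\<^sub>-)\<close> there; strict efficiency forces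
  it to equal \<open>(z\<^sub>+, z\<^sub>-)\<close>, and then maximality of \<open>r\<^sup>Q\<close> forces \<open>r = r\<^sup>Q\<close>. SDP feasibility is
  only needed to make \<open>r = 0\<close> admissible for \<open>(z\<^sub>+, z\<^sub>-)\<close>, so that \<open>r\<^sup>Q\<close> is attained.\<close>

lemma matrix_vector_mult_nonneg:
  fixes A :: "real^'n^'m"
  assumes "0 \<le> A" and "0 \<le> x"
  shows "0 \<le> A *v x"
  using assms unfolding less_eq_vec_def matrix_vector_mult_def
  by (auto intro!: sum_nonneg)

definition robust_lhs ::
  "real^'n^'m \<Rightarrow> real^'n^'m \<Rightarrow> real^'m \<Rightarrow> real^'m \<Rightarrow> real^'n \<Rightarrow> real^'n \<Rightarrow> real \<Rightarrow> real^'m" where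
  "robust_lhs Ac Ad bc bd xp xm r = r *\<^sub>R (Ad *v xp + Ad *v xm + bd) + Ac *v xp - Ac *v xm - bc"

lemma lp_feasible_iff:
  "(xp, xm) \<in> lp_feasible Ac Ad bc bd l u r \<longleftrightarrow>
     0 \<le> xp \<and> 0 \<le> xm \<and> robust_lhs Ac Ad bc bd xp xm r \<le> 0 \<and> l \<le> xp - xm \<and> xp - xm \<le> u"
proof -
  have "(Ac + r *\<^sub>R Ad) *v xp - (Ac - r *\<^sub>R Ad) *v xm - (bc - r *\<^sub>R bd)
          = robust_lhs Ac Ad bc bd xp xm r"
    by (simp add: robust_lhs_def algebra_simps scaleR_matrix_vector_assoc)
  then show ?thesis
    unfolding lp_feasible_def
    by (metis (no_types, lifting) case_prod_conv diff_le_0_iff_le mem_Collect_eq)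
qed

lemma qcqp_feasible_iff_lp_feasible:
  "(xp, xm, r) \<in> qcqp_feasible Ac Ad bc bd l u \<longleftrightarrow>
     0 \<le> r \<and> r \<le> 1 \<and> (xp, xm) \<in> lp_feasible Ac Ad bc bd l u r"
  unfolding lp_feasible_iff qcqp_feasible_def robust_lhs_def
  by (auto simp: algebra_simps)

lemma robust_lhs_mono:
  assumes "0 \<le> Ad" and "0 \<le> bd" and "0 \<le> xp" and "0 \<le> xm" and "r \<le> s"
  shows "robust_lhs Ac Ad bc bd xp xm r \<le> robust_lhs Ac Ad bc bd xp xm s"
proof -
  have "0 \<le> Ad *v xp + Ad *v xm + bd"
    using assms by (simp add: matrix_vector_mult_nonneg add_nonneg_nonneg)
  then have "r *\<^sub>R (Ad *v xp + Ad *v xm + bd) \<le> s *\<^sub>R (Ad *v xp + Ad *v xm + bd)"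
    using \<open>r \<le> s\<close> by (simp add: scaleR_right_mono)
  then show ?thesis
    unfolding robust_lhs_def by (simp add: diff_right_mono add_right_mono)
qed

lemma lp_feasible_antimono:
  assumes "0 \<le> Ad" and "0 \<le> bd" and "r \<le> s"
    and "(xp, xm) \<in> lp_feasible Ac Ad bc bd l u s"
  shows "(xp, xm) \<in> lp_feasible Ac Ad bc bd l u r"
  using assms robust_lhs_mono[OF assms(1,2) _ _ assms(3)] order_trans
  unfolding lp_feasible_iff by blast

lemma Greatest_of_compact:
  fixes P :: "real \<Rightarrow> bool"
  assumes "compact (Collect P)" and "P r"
  shows "P (Greatest P)" and "\<And>s. P s \<Longrightarrow> s \<le> Greatest P"
proof -
  obtain m where "P m" and m_max: "\<And>s. P s \<Longrightarrow> s \<le> m"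
    using compact_attains_sup[OF assms(1)] assms(2) by auto
  then have "Greatest P = m"
    by (blast intro: Greatest_equality)
  with \<open>P m\<close> m_max show "P (Greatest P)" and "\<And>s. P s \<Longrightarrow> s \<le> Greatest P"
    by auto
qed

lemma compact_robust_levels:
  "compact {r. 0 \<le> r \<and> r \<le> 1 \<and> robust_lhs Ac Ad bc bd xp xm r \<le> 0}"
  unfolding compact_eq_bounded_closed
proof
  show "bounded {r. 0 \<le> r \<and> r \<le> 1 \<and> robust_lhs Ac Ad bc bd xp xm r \<le> 0}"
    by (rule bounded_subset[of "{0..1}"]) auto
  have "closed {r. \<forall>i. (robust_lhs Ac Ad bc bd xp xm r) $ i \<le> 0}"
    unfolding robust_lhs_def
    by (simp add: Collect_all_eq closed_INT closed_Collect_le continuous_intros)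
  then show "closed {r. 0 \<le> r \<and> r \<le> 1 \<and> robust_lhs Ac Ad bc bd xp xm r \<le> 0}"
    by (simp add: Collect_conj_eq closed_Int closed_Collect_le less_eq_vec_def)
qed

lemma qcqp_obj_le_iff:
  "qcqp_obj G (xp, xm, r) \<le> qcqp_obj G (yp, ym, s) \<longleftrightarrow>
     lp_obj G (xp, xm) \<le> lp_obj G (yp, ym) \<and> s \<le> r"
  unfolding less_eq_vec_def qcqp_obj_def lp_obj_def
  by (auto split: sum.splits)

lemma sdp_feasible_imp_nominal_lp_feasible:
  assumes "0 \<le> Ad" and "0 \<le> bd" and "sdp_feasible Ac Ad bc bd l u Z"
  shows "(sdp_zp Z, sdp_zm Z) \<in> lp_feasible Ac Ad bc bd l u 0"
proof -
  let ?lifted = "Ad *v (sdp_wp Z + sdp_wm Z) + sdp_rho Z *\<^sub>R bd"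
  have "0 \<le> ?lifted"
    using assms unfolding sdp_feasible_def
    by (simp add: matrix_vector_mult_nonneg add_nonneg_nonneg scaleR_nonneg_nonneg)
  moreover have "Ac *v sdp_zp Z - Ac *v sdp_zm Z - bc + ?lifted \<le> 0"
    using assms(3) unfolding sdp_feasible_def by (simp add: algebra_simps)
  ultimately have "Ac *v sdp_zp Z - Ac *v sdp_zm Z - bc \<le> 0"
    by (meson add_increasing2 order_trans order_refl)
  then show ?thesis
    using assms(3) by (simp add: lp_feasible_iff robust_lhs_def sdp_feasible_def)
qed

lemma recon_r_maximal:
  assumes "0 \<le> Ad" and "0 \<le> bd" and "sdp_feasible Ac Ad bc bd l u Z"
  shows "(sdp_zp Z, sdp_zm Z, recon_r Ac Ad bc bd Z) \<in> qcqp_feasible Ac Ad bc bd l u"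
    and "\<And>r. (sdp_zp Z, sdp_zm Z, r) \<in> qcqp_feasible Ac Ad bc bd l u \<Longrightarrow> r \<le> recon_r Ac Ad bc bd Z"
proof -
  define P where
    "P r \<longleftrightarrow> 0 \<le> r \<and> r \<le> 1 \<and> robust_lhs Ac Ad bc bd (sdp_zp Z) (sdp_zm Z) r \<le> 0" for r
  have nominal: "(sdp_zp Z, sdp_zm Z) \<in> lp_feasible Ac Ad bc bd l u 0"
    using assms by (rule sdp_feasible_imp_nominal_lp_feasible)
  then have feasible_iff:
    "(sdp_zp Z, sdp_zm Z, r) \<in> qcqp_feasible Ac Ad bc bd l u \<longleftrightarrow> P r" for r
    by (auto simp: P_def qcqp_feasible_iff_lp_feasible lp_feasible_iff)
  have "recon_r Ac Ad bc bd Z = Greatest P"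
    unfolding recon_r_def P_def[abs_def] robust_lhs_def by (rule refl)
  moreover have "compact (Collect P)"
    unfolding P_def by (rule compact_robust_levels)
  moreover have "P 0"
    using nominal by (simp add: P_def lp_feasible_iff)
  ultimately show "(sdp_zp Z, sdp_zm Z, recon_r Ac Ad bc bd Z) \<in> qcqp_feasible Ac Ad bc bd l u"
    and "\<And>r. (sdp_zp Z, sdp_zm Z, r) \<in> qcqp_feasible Ac Ad bc bd l u \<Longrightarrow> r \<le> recon_r Ac Ad bc bd Z"
    using Greatest_of_compact feasible_iff by metis+
qed

theorem mainTheorem1:
  fixes Ac Ad :: "real^'n^'m" and bc bd :: "real^'m" and G :: "real^'n^'k"
    and l u :: "real^'n" and Z :: "real^('n sdpidx)^('n sdpidx)"
  assumes "0 \<le> Ad" and "0 \<le> bd" and "l \<le> u"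
    and "sdp_feasible Ac Ad bc bd l u Z"
    and "strictly_efficient (lp_feasible Ac Ad bc bd l u (recon_r Ac Ad bc bd Z)) (lp_obj G)
           (sdp_zp Z, sdp_zm Z)"
  shows "efficient (qcqp_feasible Ac Ad bc bd l u) (qcqp_obj G)
           (sdp_zp Z, sdp_zm Z, recon_r Ac Ad bc bd Z)"
proof -
  let ?Q = "qcqp_feasible Ac Ad bc bd l u" and ?rQ = "recon_r Ac Ad bc bd Z"
  note feasible = recon_r_maximal(1)[OF assms(1,2,4)]
    and maximal = recon_r_maximal(2)[OF assms(1,2,4)]
  show ?thesis
    unfolding efficient_def
  proof (intro conjI feasible notI)
    assume "\<exists>y\<in>?Q. qcqp_obj G y \<le> qcqp_obj G (sdp_zp Z, sdp_zm Z, ?rQ) \<and>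
                    qcqp_obj G y \<noteq> qcqp_obj G (sdp_zp Z, sdp_zm Z, ?rQ)"
    then obtain yp ym r where y: "(yp, ym, r) \<in> ?Q"
      and dominates: "qcqp_obj G (yp, ym, r) \<le> qcqp_obj G (sdp_zp Z, sdp_zm Z, ?rQ)"
      and differs: "qcqp_obj G (yp, ym, r) \<noteq> qcqp_obj G (sdp_zp Z, sdp_zm Z, ?rQ)"
      by auto
    from dominates have G_le: "lp_obj G (yp, ym) \<le> lp_obj G (sdp_zp Z, sdp_zm Z)"
      and "?rQ \<le> r" by (simp_all add: qcqp_obj_le_iff)
    with y have "(yp, ym) \<in> lp_feasible Ac Ad bc bd l u ?rQ"
      using assms(1,2) lp_feasible_antimono qcqp_feasible_iff_lp_feasible by blast
    with G_le assms(5) have "(yp, ym) = (sdp_zp Z, sdp_zm Z)"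
      unfolding strictly_efficient_def by blast
    with y have "r = ?rQ"
      using maximal \<open>?rQ \<le> r\<close> by fastforce
    with differs \<open>(yp, ym) = (sdp_zp Z, sdp_zm Z)\<close> show False
      by simp
  qed
qed

end
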